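(* Let $L$ be an ideal lattice and let $f\colon(X,\sigma)\to(X',\sigma')$ be a morphism of support data on $L$, i.e. a continuous map $f\colon X\to X'$ with $\sigma(a)=f^{-1}(\sigma'(a))$ for all compact $a\in L$. If both $(X,\sigma)$ and $(X',\sigma')$ are classifying, then $f$ is a homeomorphism.
   Context: An ideal lattice is a poset $(L,\leq)$ with an associative multiplication such that: (L1) $L$ is a complete lattice; (L2) every element is a supremum of compact elements ($a$ is compact if $a\leq\sup A$ implies $a\leq\sup A'$ for some finite $A'\subseteq A$); (L3) multiplication distributes over binary joins on both sides; (L4) $1=\sup L$ is compact and is a two-sided identity; (L5) products of compact elements are compact. Semi-prime: $bb\leq a\Rightarrow b\leq a$. A support datum on $L$ is a pair $(X,\sigma)$ with $X$ a topological space and $\sigma$ assigning to each compact $a$ a closed subset $\sigma(a)\subseteq X$ with $\sigma(a\vee b)=\sigma(a)\cup\sigma(b)$, $\sigma(1)=X$, $\sigma(ab)=\sigma(a)\cap\sigma(b)$. It is classifying if $X$ is spectral (i.e. $T_0$, quasi-compact, quasi-compact opens closed under finite intersections and forming a basis, every non-empty irreducible closed set has a generic point) and the assignments $a\mapsto\bigcup_{b\leq a,\ b\text{ compact}}\sigma(b)$ and $Y\mapsto\bigvee_{b\text{ compact},\,\sigma(b)\subseteq Y}b$ induce mutually inverse bijections between the semi-prime elements of $L$ and the subsets $Y\subseteq X$ of the form $Y=\bigcup_i Y_i$ with each $X\setminus Y_i$ quasi-compact open. *)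

theory Defs
  imports "HOL-Analysis.Analysis"
begin

definition compact_elem :: "'l::complete_lattice \<Rightarrow> bool" where
  "compact_elem a \<longleftrightarrow>
     (\<forall>A. a \<le> Sup A \<longrightarrow> (\<exists>A'. finite A' \<and> A' \<subseteq> A \<and> a \<le> Sup A'))"

definition ideal_lattice :: "('l::complete_lattice \<Rightarrow> 'l \<Rightarrow> 'l) \<Rightarrow> bool" where
  "ideal_lattice m \<longleftrightarrow>
     (\<forall>a b c. m (m a b) c = m a (m b c)) \<and>
     (\<forall>a::'l. a = Sup {b. compact_elem b \<and> b \<le> a}) \<and>
     (\<forall>a b c. m a (sup b c) = sup (m a b) (m a c) \<and> m (sup b c) a = sup (m b a) (m c a)) \<and>
     compact_elem (top::'l) \<and> (\<forall>a. m top a = a \<and> m a top = a) \<and>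
     (\<forall>a b. compact_elem a \<longrightarrow> compact_elem b \<longrightarrow> compact_elem (m a b))"

definition semi_prime :: "('l::complete_lattice \<Rightarrow> 'l \<Rightarrow> 'l) \<Rightarrow> 'l \<Rightarrow> bool" where
  "semi_prime m a \<longleftrightarrow> (\<forall>b. m b b \<le> a \<longrightarrow> b \<le> a)"

definition support_datum ::
  "('l::complete_lattice \<Rightarrow> 'l \<Rightarrow> 'l) \<Rightarrow> 'a topology \<Rightarrow> ('l \<Rightarrow> 'a set) \<Rightarrow> bool" where
  "support_datum m X \<sigma> \<longleftrightarrow>
     (\<forall>a. compact_elem a \<longrightarrow> closedin X (\<sigma> a)) \<and>
     (\<forall>a b. compact_elem a \<longrightarrow> compact_elem b \<longrightarrow> \<sigma> (sup a b) = \<sigma> a \<union> \<sigma> b) \<and>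
     \<sigma> top = topspace X \<and>
     (\<forall>a b. compact_elem a \<longrightarrow> compact_elem b \<longrightarrow> \<sigma> (m a b) = \<sigma> a \<inter> \<sigma> b)"

definition irreducible_closed :: "'a topology \<Rightarrow> 'a set \<Rightarrow> bool" where
  "irreducible_closed X Z \<longleftrightarrow> closedin X Z \<and> Z \<noteq> {} \<and>
     (\<forall>Z1 Z2. closedin X Z1 \<longrightarrow> closedin X Z2 \<longrightarrow> Z = Z1 \<union> Z2 \<longrightarrow> Z = Z1 \<or> Z = Z2)"

definition spectral_space :: "'a topology \<Rightarrow> bool" where
  "spectral_space X \<longleftrightarrow>
     t0_space X \<and> compact_space X \<and>
     (\<forall>U V. openin X U \<longrightarrow> compactin X U \<longrightarrow> openin X V \<longrightarrow> compactin X V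
            \<longrightarrow> compactin X (U \<inter> V)) \<and>
     (\<forall>W x. openin X W \<longrightarrow> x \<in> W \<longrightarrow>
            (\<exists>U. openin X U \<and> compactin X U \<and> x \<in> U \<and> U \<subseteq> W)) \<and>
     (\<forall>Z. irreducible_closed X Z \<longrightarrow> (\<exists>x\<in>Z. X closure_of {x} = Z))"

definition thomason_subset :: "'a topology \<Rightarrow> 'a set \<Rightarrow> bool" where
  "thomason_subset X Y \<longleftrightarrow>
     (\<exists>F. (\<forall>Z\<in>F. Z \<subseteq> topspace X \<and> openin X (topspace X - Z) \<and> compactin X (topspace X - Z))
          \<and> Y = \<Union>F)"

definition supp_of_elem :: "('l::complete_lattice \<Rightarrow> 'a set) \<Rightarrow> 'l \<Rightarrow> 'a set" where
  "supp_of_elem \<sigma> a = \<Union>{\<sigma> b | b. b \<le> a \<and> compact_elem b}"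

definition elem_of_subset :: "('l::complete_lattice \<Rightarrow> 'a set) \<Rightarrow> 'a set \<Rightarrow> 'l" where
  "elem_of_subset \<sigma> Y = Sup {b. compact_elem b \<and> \<sigma> b \<subseteq> Y}"

definition classifying ::
  "('l::complete_lattice \<Rightarrow> 'l \<Rightarrow> 'l) \<Rightarrow> 'a topology \<Rightarrow> ('l \<Rightarrow> 'a set) \<Rightarrow> bool" where
  "classifying m X \<sigma> \<longleftrightarrow>
     spectral_space X \<and>
     (\<forall>a. semi_prime m a \<longrightarrow> thomason_subset X (supp_of_elem \<sigma> a)) \<and>
     (\<forall>Y. thomason_subset X Y \<longrightarrow> semi_prime m (elem_of_subset \<sigma> Y)) \<and>
     (\<forall>a. semi_prime m a \<longrightarrow> elem_of_subset \<sigma> (supp_of_elem \<sigma> a) = a) \<and>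
     (\<forall>Y. thomason_subset X Y \<longrightarrow> supp_of_elem \<sigma> (elem_of_subset \<sigma> Y) = Y)"

definition support_morphism ::
  "'a topology \<Rightarrow> ('l::complete_lattice \<Rightarrow> 'a set) \<Rightarrow> 'b topology \<Rightarrow> ('l \<Rightarrow> 'b set)
     \<Rightarrow> ('a \<Rightarrow> 'b) \<Rightarrow> bool" where
  "support_morphism X \<sigma> X' \<sigma>' f \<longleftrightarrow>
     continuous_map X X' f \<and>
     (\<forall>a. compact_elem a \<longrightarrow> \<sigma> a = {x \<in> topspace X. f x \<in> \<sigma>' a})"

end

theory Submission
  imports Defs
begin

(* The two classifying properties identify the semi-prime elements of L with the Thomason
   subsets of X and of X', and the morphism condition says that supp sigma is the preimage of
   supp sigma' under f.  Hence taking preimages under f is a bijection from the Thomason subsets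
   of X' onto those of X; nothing else about L or the support data is needed.

   This bijection preserves unions, hence it preserves the compact elements of the two lattices of
   Thomason subsets.  In a spectral space these are exactly the complements of quasi-compact opens
   (compactness of the Hochster dual topology, proved with Zorn's lemma and generic points), so
   preimage is also a bijection between quasi-compact opens.  Since quasi-compact opens form a
   T0 basis, f is injective.  For surjectivity, given y the preimage of the closure of y meets
   every preimage of a quasi-compact open neighbourhood of y, so the same compactness argument
   yields a point x in all of them, and then f x and y lie in the same quasi-compact opens,
   i.e. f x = y.  Finally f maps each quasi-compact open f^-1(U') onto U', so it is open. *)

definition compact_openin :: "'a topology \<Rightarrow> 'a set \<Rightarrow> bool" where
  "compact_openin X U \<longleftrightarrow> openin X U \<and> compactin X U"

lemma compact_openin_subset_topspace: "compact_openin X U \<Longrightarrow> U \<subseteq> topspace X"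
  unfolding compact_openin_def by (simp add: openin_subset)

lemma compact_openin_Union:
  "finite \<U> \<Longrightarrow> (\<And>U. U \<in> \<U> \<Longrightarrow> compact_openin X U) \<Longrightarrow> compact_openin X (\<Union>\<U>)"
  unfolding compact_openin_def by (auto intro: compactin_Union)

lemma spectral_space_compact_openin_topspace:
  "spectral_space X \<Longrightarrow> compact_openin X (topspace X)"
  unfolding spectral_space_def compact_openin_def compact_space_def by simp

lemma spectral_space_compact_openin_Int:
  "spectral_space X \<Longrightarrow> compact_openin X U \<Longrightarrow> compact_openin X V \<Longrightarrow> compact_openin X (U \<inter> V)"
  unfolding spectral_space_def compact_openin_def by (simp add: openin_Int)

lemma spectral_space_compact_openin_Inter:
  assumes "spectral_space X" "finite \<U>" "\<And>U. U \<in> \<U> \<Longrightarrow> compact_openin X U"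
  shows "compact_openin X (topspace X \<inter> \<Inter>\<U>)"
  using assms(2,3)
proof (induction rule: finite_induct)
  case empty
  then show ?case using spectral_space_compact_openin_topspace[OF assms(1)] by simp
next
  case (insert U \<U>)
  then have "compact_openin X (U \<inter> (topspace X \<inter> \<Inter>\<U>))"
    by (simp add: spectral_space_compact_openin_Int[OF assms(1)])
  then show ?case by (simp add: Int_left_commute)
qed

lemma spectral_space_compact_openin_basis:
  assumes "spectral_space X" "openin X W" "x \<in> W"
  obtains U where "compact_openin X U" "x \<in> U" "U \<subseteq> W"
proof -
  have "\<forall>W x. openin X W \<longrightarrow> x \<in> W \<longrightarrow> (\<exists>U. openin X U \<and> compactin X U \<and> x \<in> U \<and> U \<subseteq> W)"
    using assms(1) unfolding spectral_space_def by (elim conjE)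
  then show thesis using that assms(2,3) unfolding compact_openin_def by blast
qed

lemma spectral_space_compact_openin_separating:
  assumes "spectral_space X" "x \<in> topspace X" "y \<in> topspace X"
    and same: "\<And>U. compact_openin X U \<Longrightarrow> x \<in> U \<longleftrightarrow> y \<in> U"
  shows "x = y"
proof (rule ccontr)
  assume "x \<noteq> y"
  then obtain W where W: "openin X W" "x \<notin> W \<longleftrightarrow> y \<in> W"
    using assms(1-3) unfolding spectral_space_def t0_space_def by (elim conjE) metis
  then obtain z where z: "z \<in> {x, y}" "z \<in> W" by blast
  then obtain U where "compact_openin X U" "z \<in> U" "U \<subseteq> W"
    using spectral_space_compact_openin_basis[OF assms(1) W(1)] by blast
  then show False using same W z by blast
qed

lemma spectral_space_generic_point:
  assumes "spectral_space X" "irreducible_closed X W"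
  obtains x where "x \<in> W" "X closure_of {x} = W"
proof -
  have "\<forall>Z. irreducible_closed X Z \<longrightarrow> (\<exists>x\<in>Z. X closure_of {x} = Z)"
    using assms(1) unfolding spectral_space_def by (elim conjE)
  then show thesis using that assms(2) by blast
qed

lemma thomason_subset_iff:
  "thomason_subset X Y \<longleftrightarrow>
     (\<forall>y\<in>Y. \<exists>U. compact_openin X U \<and> y \<in> topspace X - U \<and> topspace X - U \<subseteq> Y)"
proof
  assume "thomason_subset X Y"
  then obtain \<F> where \<F>: "\<And>Z. Z \<in> \<F> \<Longrightarrow> Z \<subseteq> topspace X \<and> openin X (topspace X - Z) \<and> compactin X (topspace X - Z)"
    and Y: "Y = \<Union>\<F>"
    unfolding thomason_subset_def by blast
  show "\<forall>y\<in>Y. \<exists>U. compact_openin X U \<and> y \<in> topspace X - U \<and> topspace X - U \<subseteq> Y"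
  proof
    fix y assume "y \<in> Y"
    then obtain Z where "Z \<in> \<F>" "y \<in> Z" using Y by blast
    moreover have "Z \<subseteq> topspace X" "compact_openin X (topspace X - Z)"
      using \<F>[OF \<open>Z \<in> \<F>\<close>] unfolding compact_openin_def by auto
    moreover have "topspace X - (topspace X - Z) = Z" using \<open>Z \<subseteq> topspace X\<close> by blast
    ultimately show "\<exists>U. compact_openin X U \<and> y \<in> topspace X - U \<and> topspace X - U \<subseteq> Y"
      unfolding Y by (metis Union_upper)
  qed
next
  assume pointwise: "\<forall>y\<in>Y. \<exists>U. compact_openin X U \<and> y \<in> topspace X - U \<and> topspace X - U \<subseteq> Y"
  define \<F> where "\<F> = {topspace X - U | U. compact_openin X U \<and> topspace X - U \<subseteq> Y}"
  have "Z \<subseteq> topspace X \<and> openin X (topspace X - Z) \<and> compactin X (topspace X - Z)" if "Z \<in> \<F>" for Z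
    using that unfolding \<F>_def compact_openin_def
    by (auto simp: Diff_Diff_Int openin_subset inf.absorb2)
  moreover have "Y = \<Union>\<F>"
  proof
    show "Y \<subseteq> \<Union>\<F>"
    proof
      fix y assume "y \<in> Y"
      then obtain U where "compact_openin X U" "y \<in> topspace X - U" "topspace X - U \<subseteq> Y"
        using pointwise by blast
      then show "y \<in> \<Union>\<F>" unfolding \<F>_def by blast
    qed
    show "\<Union>\<F> \<subseteq> Y" unfolding \<F>_def by blast
  qed
  ultimately show "thomason_subset X Y" unfolding thomason_subset_def by (intro exI[of _ \<F>]) blast
qed

lemma thomason_subset_Union: "(\<And>Y. Y \<in> \<Y> \<Longrightarrow> thomason_subset X Y) \<Longrightarrow> thomason_subset X (\<Union>\<Y>)"
  unfolding thomason_subset_iff by (metis UnionE Union_upper subset_trans)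

lemma thomason_subset_Un: "thomason_subset X Y \<Longrightarrow> thomason_subset X Z \<Longrightarrow> thomason_subset X (Y \<union> Z)"
  using thomason_subset_Union[of "{Y, Z}"] by auto

lemma thomason_subset_compl: "compact_openin X U \<Longrightarrow> thomason_subset X (topspace X - U)"
  unfolding thomason_subset_iff by (intro ballI exI[of _ U]) simp

lemma compactin_subset_Union_chain:
  assumes "compactin X K" "K \<subseteq> \<Union>\<C>" "\<C> \<noteq> {}" "\<And>G. G \<in> \<C> \<Longrightarrow> openin X G"
    and chain: "subset.chain \<A> \<C>"
  shows "\<exists>G\<in>\<C>. K \<subseteq> G"
proof -
  obtain \<F> where \<F>: "finite \<F>" "\<F> \<subseteq> \<C>" "K \<subseteq> \<Union>\<F>"
    using assms(1)[unfolded compactin_def, THEN conjunct2, THEN spec[of _ \<C>]] assms(2,4) by blast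
  show ?thesis
  proof (cases "\<F> = {}")
    case True
    then show ?thesis using \<F>(3) assms(3) by blast
  next
    case False
    have "subset.chain \<A> \<F>" using chain \<F>(2) by (simp add: subset_chain_def subset_iff)
    then have "\<Union>\<F> \<in> \<F>" using \<F>(1) False by (intro Union_in_chain)
    then show ?thesis using \<F>(2,3) by blast
  qed
qed

lemma openin_maximal_not_covering_compactin:
  assumes C: "closedin X C"
    and \<U>: "\<And>U. U \<in> \<U> \<Longrightarrow> compactin X U"
    and meets: "\<And>U. U \<in> \<U> \<Longrightarrow> C \<inter> U \<noteq> {}"
  obtains G where "openin X G" "topspace X - C \<subseteq> G" "\<And>U. U \<in> \<U> \<Longrightarrow> \<not> U \<subseteq> G"
    "\<And>G'. openin X G' \<Longrightarrow> G \<subseteq> G' \<Longrightarrow> \<forall>U\<in>\<U>. \<not> U \<subseteq> G' \<Longrightarrow> G' = G"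
proof -
  define \<O> where "\<O> = {G. openin X G \<and> topspace X - C \<subseteq> G \<and> (\<forall>U\<in>\<U>. \<not> U \<subseteq> G)}"
  have "\<exists>B\<in>\<O>. \<forall>G\<in>\<C>. G \<subseteq> B" if chain: "subset.chain \<O> \<C>" for \<C>
  proof (intro bexI ballI)
    have \<C>: "\<C> \<subseteq> \<O>" using chain by (simp add: subset_chain_def)
    define B where "B = (topspace X - C) \<union> \<Union>\<C>"
    show "G \<subseteq> B" if "G \<in> \<C>" for G using that unfolding B_def by blast
    have uncovered: "\<not> U \<subseteq> B" if U: "U \<in> \<U>" for U
    proof
      assume "U \<subseteq> B"
      then have cover: "U \<subseteq> \<Union>(insert (topspace X - C) \<C>)" unfolding B_def by blast
      have open_members: "\<And>G. G \<in> insert (topspace X - C) \<C> \<Longrightarrow> openin X G"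
        using C \<C> unfolding \<O>_def by blast
      have "topspace X - C \<subseteq> G" if "G \<in> \<C>" for G using that \<C> unfolding \<O>_def by blast
      then have "subset.chain UNIV (insert (topspace X - C) \<C>)"
        using chain unfolding subset_chain_insert by (auto simp: subset_chain_def)
      then have "\<exists>G\<in>insert (topspace X - C) \<C>. U \<subseteq> G"
        using compactin_subset_Union_chain[OF \<U>[OF U] cover insert_not_empty open_members] by blast
      then obtain G where "G = topspace X - C \<or> G \<in> \<O>" "U \<subseteq> G" using \<C> by blast
      then show False using meets[OF U] U unfolding \<O>_def by blast
    qed
    have "openin X B"
      using C \<C> unfolding B_def \<O>_def by (intro openin_Un openin_Union) auto
    then show "B \<in> \<O>" using uncovered unfolding \<O>_def by (simp add: B_def)
  qed
  from subset_Zorn[OF this] obtain G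
    where G: "G \<in> \<O>" and maximal: "\<And>G'. G' \<in> \<O> \<Longrightarrow> G \<subseteq> G' \<Longrightarrow> G' = G"
    by blast
  show thesis
  proof (rule that)
    show "openin X G" "topspace X - C \<subseteq> G" using G unfolding \<O>_def by blast+
    show "\<not> U \<subseteq> G" if "U \<in> \<U>" for U using that G unfolding \<O>_def by blast
    show "G' = G" if G': "openin X G'" "G \<subseteq> G'" "\<forall>U\<in>\<U>. \<not> U \<subseteq> G'" for G'
    proof (rule maximal)
      show "G' \<in> \<O>" using G' G unfolding \<O>_def by blast
      show "G \<subseteq> G'" by (rule G'(2))
    qed
  qed
qed

lemma closedin_minimal_meeting_compactin:
  assumes C: "closedin X C"
    and \<U>: "\<And>U. U \<in> \<U> \<Longrightarrow> compactin X U"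
    and meets: "\<And>U. U \<in> \<U> \<Longrightarrow> C \<inter> U \<noteq> {}"
  obtains W where "closedin X W" "W \<subseteq> C" "\<And>U. U \<in> \<U> \<Longrightarrow> W \<inter> U \<noteq> {}"
    "\<And>V. closedin X V \<Longrightarrow> V \<subset> W \<Longrightarrow> \<exists>U\<in>\<U>. V \<inter> U = {}"
proof -
  obtain G where G: "openin X G" "topspace X - C \<subseteq> G" and uncovered: "\<And>U. U \<in> \<U> \<Longrightarrow> \<not> U \<subseteq> G"
    and maximal: "\<And>G'. openin X G' \<Longrightarrow> G \<subseteq> G' \<Longrightarrow> \<forall>U\<in>\<U>. \<not> U \<subseteq> G' \<Longrightarrow> G' = G"
    using openin_maximal_not_covering_compactin[OF C \<U> meets] by blast
  show thesis
  proof (rule that)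
    show "closedin X (topspace X - G)" using G(1) by (rule closedin_diff[OF closedin_topspace])
    show "topspace X - G \<subseteq> C" using G(2) closedin_subset[OF C] by blast
    show "(topspace X - G) \<inter> U \<noteq> {}" if "U \<in> \<U>" for U
      using uncovered[OF that] compactin_subset_topspace[OF \<U>[OF that]] by blast
    show "\<exists>U\<in>\<U>. V \<inter> U = {}" if V: "closedin X V" "V \<subset> topspace X - G" for V
    proof (rule ccontr)
      assume "\<not> (\<exists>U\<in>\<U>. V \<inter> U = {})"
      then have "\<forall>U\<in>\<U>. \<not> U \<subseteq> topspace X - V" by blast
      moreover have "G \<subseteq> topspace X - V" using V(2) openin_subset[OF G(1)] by blast
      ultimately have "topspace X - V = G" using V(1) by (intro maximal) auto
      then show False using V closedin_subset by blast
    qed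
  qed
qed

(* A minimal closed subset of C meeting every member of the filter base is irreducible, and its
   generic point lies in every member. *)
lemma spectral_space_closedin_meets_Inter_compact_openin:
  assumes X: "spectral_space X" and C: "closedin X C"
    and \<U>: "\<U> \<noteq> {}" "\<And>U. U \<in> \<U> \<Longrightarrow> compact_openin X U"
      "\<And>U V. U \<in> \<U> \<Longrightarrow> V \<in> \<U> \<Longrightarrow> U \<inter> V \<in> \<U>"
    and meets: "\<And>U. U \<in> \<U> \<Longrightarrow> C \<inter> U \<noteq> {}"
  shows "\<exists>x\<in>C. \<forall>U\<in>\<U>. x \<in> U"
proof -
  obtain W where W: "closedin X W" "W \<subseteq> C" and W_meets: "\<And>U. U \<in> \<U> \<Longrightarrow> W \<inter> U \<noteq> {}"
    and escape: "\<And>V. closedin X V \<Longrightarrow> V \<subset> W \<Longrightarrow> \<exists>U\<in>\<U>. V \<inter> U = {}"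
    using closedin_minimal_meeting_compactin[OF C _ meets, of \<U>] \<U>(2)
    unfolding compact_openin_def by blast
  have "irreducible_closed X W"
    unfolding irreducible_closed_def
  proof (intro conjI allI impI)
    show "closedin X W" by (rule W(1))
    show "W \<noteq> {}" using W_meets \<U>(1) by blast
    fix W1 W2 assume W12: "closedin X W1" "closedin X W2" "W = W1 \<union> W2"
    show "W = W1 \<or> W = W2"
    proof (rule ccontr)
      assume "\<not> (W = W1 \<or> W = W2)"
      then obtain U1 U2 where "U1 \<in> \<U>" "W1 \<inter> U1 = {}" "U2 \<in> \<U>" "W2 \<inter> U2 = {}"
        using escape[of W1] escape[of W2] W12 by blast
      then show False using W_meets[of "U1 \<inter> U2"] \<U>(3) W12(3) by blast
    qed
  qed
  then obtain x where x: "x \<in> W" "X closure_of {x} = W" using spectral_space_generic_point X by blast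
  show ?thesis
  proof (intro bexI ballI)
    show "x \<in> C" using x W by blast
    show "x \<in> U" if U: "U \<in> \<U>" for U
    proof (rule ccontr)
      assume "x \<notin> U"
      then have "X closure_of {x} \<subseteq> topspace X - U"
        using x W(1) closedin_subset \<U>(2)[OF U] unfolding compact_openin_def
        by (intro closure_of_minimal) auto
      then show False using W_meets[OF U] x(2) by blast
    qed
  qed
qed

lemma spectral_space_closedin_meets_Inter_compact_openin_fip:
  assumes X: "spectral_space X" and C: "closedin X C"
    and \<V>: "\<And>V. V \<in> \<V> \<Longrightarrow> compact_openin X V"
    and fip: "\<And>\<V>\<^sub>0. finite \<V>\<^sub>0 \<Longrightarrow> \<V>\<^sub>0 \<subseteq> \<V> \<Longrightarrow> C \<inter> \<Inter>\<V>\<^sub>0 \<noteq> {}"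
  shows "\<exists>x\<in>C. \<forall>V\<in>\<V>. x \<in> V"
proof -
  define \<U> where "\<U> = (\<lambda>\<V>\<^sub>0. topspace X \<inter> \<Inter>\<V>\<^sub>0) ` {\<V>\<^sub>0. finite \<V>\<^sub>0 \<and> \<V>\<^sub>0 \<subseteq> \<V>}"
  have \<U>_cases: "\<exists>\<V>\<^sub>0. finite \<V>\<^sub>0 \<and> \<V>\<^sub>0 \<subseteq> \<V> \<and> U = topspace X \<inter> \<Inter>\<V>\<^sub>0" if "U \<in> \<U>" for U
    using that unfolding \<U>_def by blast
  have \<U>_intro: "topspace X \<inter> \<Inter>\<V>\<^sub>0 \<in> \<U>" if "finite \<V>\<^sub>0" "\<V>\<^sub>0 \<subseteq> \<V>" for \<V>\<^sub>0
    using that unfolding \<U>_def by blast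
  have "\<U> \<noteq> {}" using \<U>_intro[of "{}"] by blast
  moreover have "compact_openin X U" if U: "U \<in> \<U>" for U
  proof -
    obtain \<V>\<^sub>0 where \<V>\<^sub>0: "finite \<V>\<^sub>0" "\<V>\<^sub>0 \<subseteq> \<V>" "U = topspace X \<inter> \<Inter>\<V>\<^sub>0"
      using \<U>_cases[OF U] by blast
    have "compact_openin X V" if "V \<in> \<V>\<^sub>0" for V using that \<V>\<^sub>0(2) \<V> by blast
    then show ?thesis unfolding \<V>\<^sub>0(3) by (rule spectral_space_compact_openin_Inter[OF X \<V>\<^sub>0(1)])
  qed
  moreover have "U1 \<inter> U2 \<in> \<U>" if U1: "U1 \<in> \<U>" and U2: "U2 \<in> \<U>" for U1 U2
  proof -
    obtain \<V>1 \<V>2 where \<V>12: "finite \<V>1" "\<V>1 \<subseteq> \<V>" "U1 = topspace X \<inter> \<Inter>\<V>1"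
      "finite \<V>2" "\<V>2 \<subseteq> \<V>" "U2 = topspace X \<inter> \<Inter>\<V>2"
      using \<U>_cases[OF U1] \<U>_cases[OF U2] by blast
    then have "U1 \<inter> U2 = topspace X \<inter> \<Inter>(\<V>1 \<union> \<V>2)" by blast
    then show ?thesis using \<U>_intro[of "\<V>1 \<union> \<V>2"] \<V>12 by simp
  qed
  moreover have "C \<inter> U \<noteq> {}" if U: "U \<in> \<U>" for U
  proof -
    obtain \<V>\<^sub>0 where "finite \<V>\<^sub>0" "\<V>\<^sub>0 \<subseteq> \<V>" "U = topspace X \<inter> \<Inter>\<V>\<^sub>0"
      using \<U>_cases[OF U] by blast
    moreover have "C \<inter> (topspace X \<inter> \<Inter>\<V>\<^sub>0) = C \<inter> \<Inter>\<V>\<^sub>0" using closedin_subset[OF C] by blast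
    ultimately show ?thesis using fip by simp
  qed
  ultimately have "\<exists>x\<in>C. \<forall>U\<in>\<U>. x \<in> U"
    by (rule spectral_space_closedin_meets_Inter_compact_openin[OF X C])
  then obtain x where "x \<in> C" and x_in: "\<forall>U\<in>\<U>. x \<in> U" by blast
  have "x \<in> V" if "V \<in> \<V>" for V using x_in \<U>_intro[of "{V}"] that by auto
  then show ?thesis using \<open>x \<in> C\<close> by blast
qed

(* Complements of quasi-compact opens are compact in the Hochster dual topology. *)
lemma spectral_space_thomason_cover_finite:
  assumes X: "spectral_space X" and U: "compact_openin X U"
    and \<Y>: "\<forall>Y\<in>\<Y>. thomason_subset X Y" and cover: "topspace X - U \<subseteq> \<Union>\<Y>"
  shows "\<exists>\<Y>\<^sub>0. finite \<Y>\<^sub>0 \<and> \<Y>\<^sub>0 \<subseteq> \<Y> \<and> topspace X - U \<subseteq> \<Union>\<Y>\<^sub>0"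
proof (rule ccontr)
  assume no_finite_subcover: "\<nexists>\<Y>\<^sub>0. finite \<Y>\<^sub>0 \<and> \<Y>\<^sub>0 \<subseteq> \<Y> \<and> topspace X - U \<subseteq> \<Union>\<Y>\<^sub>0"
  define \<V> where "\<V> = {V. compact_openin X V \<and> (\<exists>Y\<in>\<Y>. topspace X - V \<subseteq> Y)}"
  have "closedin X (topspace X - U)" using U unfolding compact_openin_def by blast
  moreover have "compact_openin X V" if "V \<in> \<V>" for V using that unfolding \<V>_def by blast
  moreover have "(topspace X - U) \<inter> \<Inter>\<V>\<^sub>0 \<noteq> {}" if \<V>\<^sub>0: "finite \<V>\<^sub>0" "\<V>\<^sub>0 \<subseteq> \<V>" for \<V>\<^sub>0
  proof
    assume disjoint: "(topspace X - U) \<inter> \<Inter>\<V>\<^sub>0 = {}"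
    have "\<forall>V\<in>\<V>\<^sub>0. \<exists>Y\<in>\<Y>. topspace X - V \<subseteq> Y" using \<V>\<^sub>0(2) unfolding \<V>_def by blast
    then obtain g where g: "\<forall>V\<in>\<V>\<^sub>0. g V \<in> \<Y> \<and> topspace X - V \<subseteq> g V" by metis
    have "topspace X - U \<subseteq> \<Union>(g ` \<V>\<^sub>0)"
    proof
      fix x assume x: "x \<in> topspace X - U"
      then obtain V where "V \<in> \<V>\<^sub>0" "x \<notin> V" using disjoint by blast
      then show "x \<in> \<Union>(g ` \<V>\<^sub>0)" using g x by blast
    qed
    moreover have "g ` \<V>\<^sub>0 \<subseteq> \<Y>" using g by blast
    moreover have "finite (g ` \<V>\<^sub>0)" using \<V>\<^sub>0(1) by simp
    ultimately show False using no_finite_subcover by blast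
  qed
  ultimately have "\<exists>x\<in>topspace X - U. \<forall>V\<in>\<V>. x \<in> V"
    by (rule spectral_space_closedin_meets_Inter_compact_openin_fip[OF X])
  then obtain x where x: "x \<in> topspace X - U" and x_in: "\<And>V. V \<in> \<V> \<Longrightarrow> x \<in> V" by blast
  then obtain Y where "Y \<in> \<Y>" "x \<in> Y" using cover by blast
  then obtain V where "compact_openin X V" "x \<in> topspace X - V" "topspace X - V \<subseteq> Y"
    using \<Y> unfolding thomason_subset_iff by blast
  then show False using x_in[of V] \<open>Y \<in> \<Y>\<close> unfolding \<V>_def by blast
qed

(* The compact elements of the complete lattice of Thomason subsets, whose joins are unions. *)
definition thomason_compact :: "'a topology \<Rightarrow> 'a set \<Rightarrow> bool" where
  "thomason_compact X Y \<longleftrightarrow>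
     (\<forall>\<Y>. (\<forall>Y'\<in>\<Y>. thomason_subset X Y') \<longrightarrow> Y \<subseteq> \<Union>\<Y> \<longrightarrow>
          (\<exists>\<Y>\<^sub>0. finite \<Y>\<^sub>0 \<and> \<Y>\<^sub>0 \<subseteq> \<Y> \<and> Y \<subseteq> \<Union>\<Y>\<^sub>0))"

lemma thomason_compactI:
  assumes "\<And>\<Y>. \<forall>Y'\<in>\<Y>. thomason_subset X Y' \<Longrightarrow> Y \<subseteq> \<Union>\<Y> \<Longrightarrow>
    \<exists>\<Y>\<^sub>0. finite \<Y>\<^sub>0 \<and> \<Y>\<^sub>0 \<subseteq> \<Y> \<and> Y \<subseteq> \<Union>\<Y>\<^sub>0"
  shows "thomason_compact X Y"
  unfolding thomason_compact_def by (intro allI impI) (rule assms)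

lemma thomason_compactD:
  assumes "thomason_compact X Y" "\<forall>Y'\<in>\<Y>. thomason_subset X Y'" "Y \<subseteq> \<Union>\<Y>"
  shows "\<exists>\<Y>\<^sub>0. finite \<Y>\<^sub>0 \<and> \<Y>\<^sub>0 \<subseteq> \<Y> \<and> Y \<subseteq> \<Union>\<Y>\<^sub>0"
  using assms(1)[unfolded thomason_compact_def, THEN spec[of _ \<Y>]] assms(2,3) by blast

lemma spectral_space_thomason_compact_iff:
  assumes X: "spectral_space X" and Y: "thomason_subset X Y"
  shows "thomason_compact X Y \<longleftrightarrow> (\<exists>U. compact_openin X U \<and> Y = topspace X - U)"
proof
  assume "thomason_compact X Y"
  define \<U> where "\<U> = {U. compact_openin X U \<and> topspace X - U \<subseteq> Y}"
  have cover: "Y \<subseteq> \<Union>((\<lambda>U. topspace X - U) ` \<U>)"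
  proof
    fix y assume "y \<in> Y"
    then obtain U where "compact_openin X U" "y \<in> topspace X - U" "topspace X - U \<subseteq> Y"
      using Y unfolding thomason_subset_iff by blast
    then show "y \<in> \<Union>((\<lambda>U. topspace X - U) ` \<U>)" unfolding \<U>_def by blast
  qed
  have "\<forall>Y'\<in>(\<lambda>U. topspace X - U) ` \<U>. thomason_subset X Y'"
    using thomason_subset_compl unfolding \<U>_def by blast
  from thomason_compactD[OF \<open>thomason_compact X Y\<close> this cover]
  obtain \<Y>\<^sub>0 where "finite \<Y>\<^sub>0" "\<Y>\<^sub>0 \<subseteq> (\<lambda>U. topspace X - U) ` \<U>" "Y \<subseteq> \<Union>\<Y>\<^sub>0"
    by blast
  then obtain \<U>\<^sub>0 where \<U>\<^sub>0: "finite \<U>\<^sub>0" "\<U>\<^sub>0 \<subseteq> \<U>" "Y \<subseteq> (\<Union>U\<in>\<U>\<^sub>0. topspace X - U)"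
    using finite_subset_image[of \<Y>\<^sub>0 "\<lambda>U. topspace X - U" \<U>] by blast
  then have "Y = topspace X - (topspace X \<inter> \<Inter>\<U>\<^sub>0)" unfolding \<U>_def by blast
  moreover have "compact_openin X (topspace X \<inter> \<Inter>\<U>\<^sub>0)"
    using \<U>\<^sub>0(2) unfolding \<U>_def by (intro spectral_space_compact_openin_Inter[OF X \<U>\<^sub>0(1)]) blast
  ultimately show "\<exists>U. compact_openin X U \<and> Y = topspace X - U" by blast
next
  assume "\<exists>U. compact_openin X U \<and> Y = topspace X - U"
  then obtain U where U: "compact_openin X U" "Y = topspace X - U" by blast
  show "thomason_compact X Y"
  proof (rule thomason_compactI)
    fix \<Y> assume \<Y>: "\<forall>Y'\<in>\<Y>. thomason_subset X Y'" and "Y \<subseteq> \<Union>\<Y>"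
    then have "topspace X - U \<subseteq> \<Union>\<Y>" using U(2) by simp
    from spectral_space_thomason_cover_finite[OF X U(1) \<Y> this]
    show "\<exists>\<Y>\<^sub>0. finite \<Y>\<^sub>0 \<and> \<Y>\<^sub>0 \<subseteq> \<Y> \<and> Y \<subseteq> \<Union>\<Y>\<^sub>0" using U(2) by simp
  qed
qed

locale thomason_preimage_bijection =
  fixes X :: "'a topology" and X' :: "'b topology" and f :: "'a \<Rightarrow> 'b"
  assumes spectral: "spectral_space X" and spectral': "spectral_space X'"
    and continuous: "continuous_map X X' f"
    and bij_preimage:
      "bij_betw (\<lambda>Y. {x \<in> topspace X. f x \<in> Y}) {Y. thomason_subset X' Y} {Y. thomason_subset X Y}"
begin

abbreviation pre :: "'b set \<Rightarrow> 'a set" where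
  "pre Y \<equiv> {x \<in> topspace X. f x \<in> Y}"

lemma pre_compl: "pre (topspace X' - Y) = topspace X - pre Y"
  using continuous_map_image_subset_topspace[OF continuous] by blast

lemma thomason_subset_pre: "thomason_subset X' Y \<Longrightarrow> thomason_subset X (pre Y)"
  using bij_betwE[OF bij_preimage] by blast

lemma thomason_subset_imp_eq_pre: "thomason_subset X Y \<Longrightarrow> \<exists>Y'. thomason_subset X' Y' \<and> Y = pre Y'"
  using bij_betw_imp_surj_on[OF bij_preimage] by blast

lemma pre_subset_thomason_imp_subset:
  assumes Y1: "thomason_subset X' Y1" and Y2: "thomason_subset X' Y2" and "pre Y1 \<subseteq> pre Y2"
  shows "Y1 \<subseteq> Y2"
proof -
  have "pre (Y1 \<union> Y2) = pre Y2" using \<open>pre Y1 \<subseteq> pre Y2\<close> by blast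
  moreover have "thomason_subset X' (Y1 \<union> Y2)" using Y1 Y2 by (rule thomason_subset_Un)
  ultimately have "Y1 \<union> Y2 = Y2"
    using inj_onD[OF bij_betw_imp_inj_on[OF bij_preimage]] Y2 by simp
  then show ?thesis by blast
qed

lemma thomason_compact_pre_imp_thomason_compact:
  assumes Y': "thomason_subset X' Y'" and compact: "thomason_compact X (pre Y')"
  shows "thomason_compact X' Y'"
proof (rule thomason_compactI)
  fix \<Y>' assume \<Y>': "\<forall>Y\<in>\<Y>'. thomason_subset X' Y" and cover: "Y' \<subseteq> \<Union>\<Y>'"
  have "\<forall>Y\<in>pre ` \<Y>'. thomason_subset X Y" using \<Y>' thomason_subset_pre by blast
  moreover have "pre Y' \<subseteq> \<Union>(pre ` \<Y>')" using cover by blast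
  ultimately have "\<exists>\<Y>\<^sub>0. finite \<Y>\<^sub>0 \<and> \<Y>\<^sub>0 \<subseteq> pre ` \<Y>' \<and> pre Y' \<subseteq> \<Union>\<Y>\<^sub>0"
    by (rule thomason_compactD[OF compact])
  then obtain \<Y>\<^sub>0 where \<Y>\<^sub>0: "finite \<Y>\<^sub>0" "\<Y>\<^sub>0 \<subseteq> pre ` \<Y>'" "pre Y' \<subseteq> \<Union>\<Y>\<^sub>0"
    by blast
  then obtain \<Y>'\<^sub>0 where \<Y>'\<^sub>0: "finite \<Y>'\<^sub>0" "\<Y>'\<^sub>0 \<subseteq> \<Y>'" "\<Y>\<^sub>0 = pre ` \<Y>'\<^sub>0"
    using finite_subset_image[of \<Y>\<^sub>0 pre \<Y>'] by blast
  then have "pre Y' \<subseteq> pre (\<Union>\<Y>'\<^sub>0)" using \<Y>\<^sub>0(3) by blast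
  moreover have "thomason_subset X' (\<Union>\<Y>'\<^sub>0)" using \<Y>' \<Y>'\<^sub>0(2) by (intro thomason_subset_Union) blast
  ultimately have "Y' \<subseteq> \<Union>\<Y>'\<^sub>0" using pre_subset_thomason_imp_subset[OF Y'] by blast
  then show "\<exists>\<Y>\<^sub>0. finite \<Y>\<^sub>0 \<and> \<Y>\<^sub>0 \<subseteq> \<Y>' \<and> Y' \<subseteq> \<Union>\<Y>\<^sub>0" using \<Y>'\<^sub>0 by blast
qed

lemma thomason_compact_imp_thomason_compact_pre:
  assumes Y': "thomason_subset X' Y'" and compact: "thomason_compact X' Y'"
  shows "thomason_compact X (pre Y')"
proof (rule thomason_compactI)
  fix \<Y> assume \<Y>: "\<forall>Y\<in>\<Y>. thomason_subset X Y" and cover: "pre Y' \<subseteq> \<Union>\<Y>"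
  define \<Y>' where "\<Y>' = {Y. thomason_subset X' Y \<and> pre Y \<in> \<Y>}"
  have "\<Union>\<Y> = pre (\<Union>\<Y>')"
  proof
    show "\<Union>\<Y> \<subseteq> pre (\<Union>\<Y>')"
    proof
      fix x assume "x \<in> \<Union>\<Y>"
      then obtain Y where "Y \<in> \<Y>" "x \<in> Y" by blast
      moreover obtain Y'' where "thomason_subset X' Y''" "Y = pre Y''"
        using \<Y> \<open>Y \<in> \<Y>\<close> thomason_subset_imp_eq_pre by blast
      ultimately show "x \<in> pre (\<Union>\<Y>')" unfolding \<Y>'_def by blast
    qed
    show "pre (\<Union>\<Y>') \<subseteq> \<Union>\<Y>" unfolding \<Y>'_def by blast
  qed
  then have "pre Y' \<subseteq> pre (\<Union>\<Y>')" using cover by simp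
  moreover have "thomason_subset X' (\<Union>\<Y>')" unfolding \<Y>'_def by (intro thomason_subset_Union) blast
  ultimately have "Y' \<subseteq> \<Union>\<Y>'" using pre_subset_thomason_imp_subset[OF Y'] by blast
  moreover have "\<forall>Y\<in>\<Y>'. thomason_subset X' Y" unfolding \<Y>'_def by blast
  ultimately obtain \<Y>'\<^sub>0 where "finite \<Y>'\<^sub>0" "\<Y>'\<^sub>0 \<subseteq> \<Y>'" "Y' \<subseteq> \<Union>\<Y>'\<^sub>0"
    using thomason_compactD[OF compact, of \<Y>'] by blast
  then have "finite (pre ` \<Y>'\<^sub>0)" "pre ` \<Y>'\<^sub>0 \<subseteq> \<Y>" "pre Y' \<subseteq> \<Union>(pre ` \<Y>'\<^sub>0)"
    unfolding \<Y>'_def by blast+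
  then show "\<exists>\<Y>\<^sub>0. finite \<Y>\<^sub>0 \<and> \<Y>\<^sub>0 \<subseteq> \<Y> \<and> pre Y' \<subseteq> \<Union>\<Y>\<^sub>0" by blast
qed

lemma thomason_compact_pre_iff:
  "thomason_subset X' Y' \<Longrightarrow> thomason_compact X (pre Y') \<longleftrightarrow> thomason_compact X' Y'"
  using thomason_compact_pre_imp_thomason_compact thomason_compact_imp_thomason_compact_pre by blast

lemma compact_openin_pre:
  assumes U': "compact_openin X' U'"
  shows "compact_openin X (pre U')"
proof -
  have Z': "thomason_subset X' (topspace X' - U')" using U' by (rule thomason_subset_compl)
  moreover have "thomason_compact X' (topspace X' - U')"
    using spectral_space_thomason_compact_iff[OF spectral' Z'] U' by blast
  ultimately have "thomason_compact X (pre (topspace X' - U'))" by (simp only: thomason_compact_pre_iff)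
  then obtain V where V: "compact_openin X V" "pre (topspace X' - U') = topspace X - V"
    using spectral_space_thomason_compact_iff[OF spectral thomason_subset_pre[OF Z']] by blast
  have "pre U' = V" using V(2) compact_openin_subset_topspace[OF V(1)] unfolding pre_compl by blast
  then show ?thesis using V(1) by simp
qed

lemma compact_openin_imp_eq_pre:
  assumes U: "compact_openin X U"
  shows "\<exists>U'. compact_openin X' U' \<and> U = pre U'"
proof -
  have Z: "thomason_subset X (topspace X - U)" using U by (rule thomason_subset_compl)
  then obtain Z' where Z': "thomason_subset X' Z'" "topspace X - U = pre Z'"
    using thomason_subset_imp_eq_pre by blast
  have "thomason_compact X (topspace X - U)"
    using spectral_space_thomason_compact_iff[OF spectral Z] U by blast
  then have "thomason_compact X' Z'" using Z' by (simp only: thomason_compact_pre_iff)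
  then obtain U' where U': "compact_openin X' U'" "Z' = topspace X' - U'"
    using spectral_space_thomason_compact_iff[OF spectral' Z'(1)] by blast
  have "U = pre U'"
    using Z'(2) compact_openin_subset_topspace[OF U] unfolding U'(2) pre_compl by blast
  then show ?thesis using U'(1) by blast
qed

lemma pre_subset_compact_openin_imp_subset:
  assumes "compact_openin X' U'" "compact_openin X' V'" "pre U' \<subseteq> pre V'"
  shows "U' \<subseteq> V'"
proof -
  have "pre (topspace X' - V') \<subseteq> pre (topspace X' - U')" using assms(3) unfolding pre_compl by blast
  then have "topspace X' - V' \<subseteq> topspace X' - U'"
    using assms(1,2) by (intro pre_subset_thomason_imp_subset thomason_subset_compl)
  then show ?thesis using compact_openin_subset_topspace[OF assms(1)] by blast
qed

lemma inj_on_topspace: "inj_on f (topspace X)"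
proof (rule inj_onI)
  fix x y assume x: "x \<in> topspace X" and y: "y \<in> topspace X" and "f x = f y"
  show "x = y"
  proof (rule spectral_space_compact_openin_separating[OF spectral x y])
    fix U assume "compact_openin X U"
    then obtain U' where "U = pre U'" using compact_openin_imp_eq_pre by blast
    then show "x \<in> U \<longleftrightarrow> y \<in> U" using x y \<open>f x = f y\<close> by simp
  qed
qed

lemma pre_compact_openin_not_covered:
  assumes U': "compact_openin X' U'" "y \<in> U'"
  shows "\<not> pre U' \<subseteq> \<Union>(pre ` {V'. compact_openin X' V' \<and> y \<notin> V'})"
proof
  define \<V>' where "\<V>' = {V'. compact_openin X' V' \<and> y \<notin> V'}"
  assume "pre U' \<subseteq> \<Union>(pre ` {V'. compact_openin X' V' \<and> y \<notin> V'})"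
  then have cover: "pre U' \<subseteq> \<Union>(pre ` \<V>')" unfolding \<V>'_def .
  have "compactin X (pre U')" using compact_openin_pre[OF U'(1)] unfolding compact_openin_def by blast
  have "\<forall>V\<in>pre ` \<V>'. openin X V"
    using compact_openin_pre unfolding \<V>'_def compact_openin_def by blast
  obtain \<W> where \<W>: "finite \<W>" "\<W> \<subseteq> pre ` \<V>'" "pre U' \<subseteq> \<Union>\<W>"
    using \<open>compactin X (pre U')\<close>[unfolded compactin_def, THEN conjunct2, THEN spec[of _ "pre ` \<V>'"]]
      \<open>\<forall>V\<in>pre ` \<V>'. openin X V\<close> cover
    by blast
  from finite_subset_image[OF \<W>(1,2)] obtain \<V>\<^sub>0
    where \<V>\<^sub>0: "\<V>\<^sub>0 \<subseteq> \<V>'" "finite \<V>\<^sub>0" "\<W> = pre ` \<V>\<^sub>0"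
    by blast
  then have "pre U' \<subseteq> pre (\<Union>\<V>\<^sub>0)" using \<W>(3) by blast
  moreover have "compact_openin X' (\<Union>\<V>\<^sub>0)"
    using \<V>\<^sub>0(1,2) unfolding \<V>'_def by (intro compact_openin_Union) auto
  ultimately have "U' \<subseteq> \<Union>\<V>\<^sub>0" using pre_subset_compact_openin_imp_subset U'(1) by blast
  then show False using U'(2) \<V>\<^sub>0(1) unfolding \<V>'_def by blast
qed

lemma exists_pre_same_compact_openin:
  assumes y: "y \<in> topspace X'"
  shows "\<exists>x\<in>topspace X. \<forall>U'. compact_openin X' U' \<longrightarrow> (f x \<in> U' \<longleftrightarrow> y \<in> U')"
proof -
  define \<U>' where "\<U>' = {U'. compact_openin X' U' \<and> y \<in> U'}"
  define \<V>' where "\<V>' = {V'. compact_openin X' V' \<and> y \<notin> V'}"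
  define K where "K = topspace X - \<Union>(pre ` \<V>')"
  have "closedin X K"
    unfolding K_def \<V>'_def compact_openin_def
    by (intro closedin_diff closedin_topspace openin_Union)
      (auto intro: openin_continuous_map_preimage[OF continuous])
  moreover have "pre ` \<U>' \<noteq> {}"
    using spectral_space_compact_openin_topspace[OF spectral'] y unfolding \<U>'_def by blast
  moreover have "compact_openin X U" if "U \<in> pre ` \<U>'" for U
    using that compact_openin_pre unfolding \<U>'_def by blast
  moreover have "U1 \<inter> U2 \<in> pre ` \<U>'" if U12: "U1 \<in> pre ` \<U>'" "U2 \<in> pre ` \<U>'" for U1 U2
  proof -
    obtain U1' U2' where "U1' \<in> \<U>'" "U2' \<in> \<U>'" "U1 = pre U1'" "U2 = pre U2'" using U12 by blast
    moreover then have "U1' \<inter> U2' \<in> \<U>'"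
      unfolding \<U>'_def using spectral_space_compact_openin_Int[OF spectral'] by blast
    ultimately show ?thesis by blast
  qed
  moreover have "K \<inter> U \<noteq> {}" if "U \<in> pre ` \<U>'" for U
    using that pre_compact_openin_not_covered unfolding K_def \<U>'_def \<V>'_def by blast
  ultimately have "\<exists>x\<in>K. \<forall>U\<in>pre ` \<U>'. x \<in> U"
    by (rule spectral_space_closedin_meets_Inter_compact_openin[OF spectral])
  then obtain x where "x \<in> K" and x_in: "\<forall>U\<in>pre ` \<U>'. x \<in> U" by blast
  then have "x \<in> topspace X" "\<And>U'. U' \<in> \<U>' \<Longrightarrow> f x \<in> U'" "\<And>V'. V' \<in> \<V>' \<Longrightarrow> f x \<notin> V'"
    unfolding K_def by auto
  then show ?thesis unfolding \<U>'_def \<V>'_def by blast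
qed

lemma surj_on_topspace: "f ` topspace X = topspace X'"
proof
  show "f ` topspace X \<subseteq> topspace X'" by (rule continuous_map_image_subset_topspace[OF continuous])
  show "topspace X' \<subseteq> f ` topspace X"
  proof
    fix y assume y: "y \<in> topspace X'"
    then obtain x where x: "x \<in> topspace X"
      and same: "\<And>U'. compact_openin X' U' \<Longrightarrow> f x \<in> U' \<longleftrightarrow> y \<in> U'"
      using exists_pre_same_compact_openin by blast
    have "f x \<in> topspace X'" using x continuous_map_image_subset_topspace[OF continuous] by blast
    then have "f x = y" using spectral_space_compact_openin_separating[OF spectral' _ y] same by blast
    then show "y \<in> f ` topspace X" using x by blast
  qed
qed

lemma open_map: "open_map X X' f"
  unfolding open_map_def
proof (intro allI impI)
  fix W assume W: "openin X W"
  define \<U> where "\<U> = {U. compact_openin X U \<and> U \<subseteq> W}"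
  have "W = \<Union>\<U>"
  proof
    show "W \<subseteq> \<Union>\<U>"
    proof
      fix x assume "x \<in> W"
      then obtain U where "compact_openin X U" "x \<in> U" "U \<subseteq> W"
        using spectral_space_compact_openin_basis[OF spectral W] by blast
      then show "x \<in> \<Union>\<U>" unfolding \<U>_def by blast
    qed
    show "\<Union>\<U> \<subseteq> W" unfolding \<U>_def by blast
  qed
  moreover have "openin X' (f ` U)" if U: "U \<in> \<U>" for U
  proof -
    obtain U' where U': "compact_openin X' U'" "U = pre U'"
      using U compact_openin_imp_eq_pre unfolding \<U>_def by blast
    have "f ` U = U'"
      unfolding U'(2) using surj_on_topspace compact_openin_subset_topspace[OF U'(1)] by fastforce
    then show ?thesis using U'(1) unfolding compact_openin_def by simp
  qed
  ultimately show "openin X' (f ` W)" by (metis image_Union openin_Union imageE)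
qed

theorem homeomorphic_map: "homeomorphic_map X X' f"
  by (rule bijective_open_imp_homeomorphic_map[OF continuous open_map surj_on_topspace inj_on_topspace])

end

lemma supp_of_elem_support_morphism:
  assumes "support_morphism X \<sigma> X' \<sigma>' f"
  shows "supp_of_elem \<sigma> a = {x \<in> topspace X. f x \<in> supp_of_elem \<sigma>' a}"
proof -
  have "\<sigma> b = {x \<in> topspace X. f x \<in> \<sigma>' b}" if "compact_elem b" for b
    using assms that unfolding support_morphism_def by blast
  then show ?thesis unfolding supp_of_elem_def by blast
qed

lemma classifying_bij_betw_supp_of_elem:
  assumes "classifying m X \<sigma>"
  shows "bij_betw (supp_of_elem \<sigma>) {a. semi_prime m a} {Y. thomason_subset X Y}"
proof (rule bij_betw_byWitness[where f' = "elem_of_subset \<sigma>"])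
  have "\<forall>a. semi_prime m a \<longrightarrow> thomason_subset X (supp_of_elem \<sigma> a)"
    and "\<forall>Y. thomason_subset X Y \<longrightarrow> semi_prime m (elem_of_subset \<sigma> Y)"
    and "\<forall>a. semi_prime m a \<longrightarrow> elem_of_subset \<sigma> (supp_of_elem \<sigma> a) = a"
    and "\<forall>Y. thomason_subset X Y \<longrightarrow> supp_of_elem \<sigma> (elem_of_subset \<sigma> Y) = Y"
    using assms unfolding classifying_def by blast+
  then show "\<forall>a\<in>{a. semi_prime m a}. elem_of_subset \<sigma> (supp_of_elem \<sigma> a) = a"
    and "\<forall>Y\<in>{Y. thomason_subset X Y}. supp_of_elem \<sigma> (elem_of_subset \<sigma> Y) = Y"
    and "supp_of_elem \<sigma> ` {a. semi_prime m a} \<subseteq> {Y. thomason_subset X Y}"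
    and "elem_of_subset \<sigma> ` {Y. thomason_subset X Y} \<subseteq> {a. semi_prime m a}"
    by auto
qed

lemma support_morphism_bij_betw_preimage:
  assumes "classifying m X \<sigma>" and "classifying m X' \<sigma>'" and "support_morphism X \<sigma> X' \<sigma>' f"
  shows "bij_betw (\<lambda>Y. {x \<in> topspace X. f x \<in> Y}) {Y. thomason_subset X' Y} {Y. thomason_subset X Y}"
proof -
  let ?elem' = "the_inv_into {a. semi_prime m a} (supp_of_elem \<sigma>')"
  have supp': "bij_betw (supp_of_elem \<sigma>') {a. semi_prime m a} {Y. thomason_subset X' Y}"
    using assms(2) by (rule classifying_bij_betw_supp_of_elem)
  have "(supp_of_elem \<sigma> \<circ> ?elem') Y = {x \<in> topspace X. f x \<in> Y}"
    if "Y \<in> {Y. thomason_subset X' Y}" for Y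
    using f_the_inv_into_f_bij_betw[OF supp' that]
    unfolding comp_def supp_of_elem_support_morphism[OF assms(3)] by simp
  then have "bij_betw (supp_of_elem \<sigma> \<circ> ?elem') {Y. thomason_subset X' Y} {Y. thomason_subset X Y}
    = ?thesis"
    by (rule bij_betw_cong)
  moreover have "bij_betw (supp_of_elem \<sigma> \<circ> ?elem') {Y. thomason_subset X' Y} {Y. thomason_subset X Y}"
    using bij_betw_the_inv_into[OF supp'] classifying_bij_betw_supp_of_elem[OF assms(1)]
    by (rule bij_betw_trans)
  ultimately show ?thesis by blast
qed

theorem mainTheorem10:
  fixes m :: "'l::complete_lattice \<Rightarrow> 'l \<Rightarrow> 'l"
    and X :: "'a topology" and \<sigma> :: "'l \<Rightarrow> 'a set"
    and X' :: "'b topology" and \<sigma>' :: "'l \<Rightarrow> 'b set"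
    and f :: "'a \<Rightarrow> 'b"
  assumes "ideal_lattice m"
    and "support_datum m X \<sigma>" and "support_datum m X' \<sigma>'"
    and "support_morphism X \<sigma> X' \<sigma>' f"
    and "classifying m X \<sigma>" and "classifying m X' \<sigma>'"
  shows "homeomorphic_map X X' f"
proof -
  interpret thomason_preimage_bijection X X' f
  proof
    show "spectral_space X" "spectral_space X'"
      using assms(5,6) unfolding classifying_def by blast+
    show "continuous_map X X' f" using assms(4) unfolding support_morphism_def by blast
    show "bij_betw (\<lambda>Y. {x \<in> topspace X. f x \<in> Y}) {Y. thomason_subset X' Y} {Y. thomason_subset X Y}"
      using assms(4-6) by (rule support_morphism_bij_betw_preimage[rotated 2])
  qed
  show ?thesis by (rule homeomorphic_map)
qed

end
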